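(* Let $J=[0,+\infty)$ and let $A\colon J\to\mathcal{L}(\mathbb{R}^n)$ be of locally bounded variation on $J$ such that $I-\Delta^{-}A(t)$ is invertible for all $t\in(0,+\infty)$ and $I+\Delta^{+}A(t)$ is invertible for all $t\in J$. Let $U$ be the transition matrix of $\frac{dx}{d\tau}=D[A(t)x]$. Then the trivial solution of this equation is uniformly asymptotically stable if and only if there exist constants $\alpha,K>0$ such that $\|U(t,s_0)\|\le Ke^{-\alpha(t-s_0)}$ for all $t\ge s_0\ge 0$.
   Context: Here $\Delta^{+}A(t)=A(t^+)-A(t)$, $\Delta^{-}A(t)=A(t)-A(t^-)$. Integrals $\int_a^b \mathrm{d}[A(s)]x(s)$ are Perron–Stieltjes (Kurzweil–Stieltjes) integrals. A solution of $\frac{dx}{d\tau}=D[A(t)x]$ is a function $x$ with $x(b)-x(a)=\int_a^b\mathrm{d}[A(s)]x(s)$ for all $a,b$ in its interval of definition. The transition matrix $U\colon J\times J\to\mathcal{L}(\mathbb{R}^n)$ is the unique matrix function with $U(t,s)=I+\int_s^t\mathrm{d}[A(r)]U(r,s)$; the unique solution with $x(s_0)=x_0$ is $x(t,s_0,x_0)=U(t,s_0)x_0$ for $t\ge s_0$. The trivial solution is uniformly stable if for every $\varepsilon>0$ there is $\delta=\delta(\varepsilon)>0$ such that for all $s_0\ge0$, $\|x_0\|<\delta$ implies $\|x(t,s_0,x_0)\|<\varepsilon$ for all $t\ge s_0$. It is uniformly asymptotically stable if it is uniformly stable and there exists $\delta_0>0$ such that for each $\varepsilon>0$ there is $T=T(\varepsilon)\ge0$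 such that for all $s_0\ge0$ and $x_0$ with $\|x_0\|<\delta_0$, $\|x(t,s_0,x_0)\|<\varepsilon$ for all $t\ge s_0+T(\varepsilon)$. *)

theory Defs
  imports "HOL-Analysis.Analysis"
begin

type_synonym 'n mat = "real^'n^'n"

definition opnorm :: "'n::finite mat \<Rightarrow> real" where
  "opnorm M = onorm (\<lambda>x. M *v x)"

definition bv_on :: "(real \<Rightarrow> 'n::finite mat) \<Rightarrow> real \<Rightarrow> real \<Rightarrow> bool" where
  "bv_on A a b \<longleftrightarrow>
     bdd_above {(\<Sum>K\<in>D. opnorm (A (Sup K) - A (Inf K))) | D. D division_of {a..b}}"

definition locally_bv_J :: "(real \<Rightarrow> 'n::finite mat) \<Rightarrow> bool" where
  "locally_bv_J A \<longleftrightarrow> (\<forall>b\<ge>0. bv_on A 0 b)"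

definition jump_plus :: "(real \<Rightarrow> 'n::finite mat) \<Rightarrow> real \<Rightarrow> 'n mat" where
  "jump_plus A t = Lim (at_right t) A - A t"

definition jump_minus :: "(real \<Rightarrow> 'n::finite mat) \<Rightarrow> real \<Rightarrow> 'n mat" where
  "jump_minus A t = A t - Lim (at_left t) A"

text \<open>Kurzweil--Stieltjes integral over [a,b] (a \<le> b) of the matrix function F
  against the matrix function A:  \<integral>_a^b d[A(s)] F(s) = I.\<close>
definition ks_has_integral ::
  "(real \<Rightarrow> 'n::finite mat) \<Rightarrow> (real \<Rightarrow> 'n mat) \<Rightarrow> 'n mat \<Rightarrow> real \<Rightarrow> real \<Rightarrow> bool" where
  "ks_has_integral A F I a b \<longleftrightarrow> a \<le> b \<and>
     (\<forall>e>0. \<exists>\<gamma>. gauge \<gamma> \<and>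
        (\<forall>D. D tagged_division_of {a..b} \<and> \<gamma> fine D \<longrightarrow>
            norm ((\<Sum>(\<tau>,K)\<in>D. (A (Sup K) - A (Inf K)) ** F \<tau>) - I) < e))"

definition ks_has_integral_or ::
  "(real \<Rightarrow> 'n::finite mat) \<Rightarrow> (real \<Rightarrow> 'n mat) \<Rightarrow> 'n mat \<Rightarrow> real \<Rightarrow> real \<Rightarrow> bool" where
  "ks_has_integral_or A F I a b \<longleftrightarrow>
     (if a \<le> b then ks_has_integral A F I a b else ks_has_integral A F (- I) b a)"

definition transition_matrix :: "(real \<Rightarrow> 'n::finite mat) \<Rightarrow> (real \<Rightarrow> real \<Rightarrow> 'n mat) \<Rightarrow> bool" where
  "transition_matrix A U \<longleftrightarrow>
     (\<forall>t\<ge>0. \<forall>s\<ge>0. ks_has_integral_or A (\<lambda>r. U r s) (U t s - mat 1) s t)"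

text \<open>Stability notions for the trivial solution, where the solution through (s0,x0)
  is x(t,s0,x0) = U(t,s0) x0 for t \<ge> s0.\<close>
definition uniformly_stable :: "(real \<Rightarrow> real \<Rightarrow> 'n::finite mat) \<Rightarrow> bool" where
  "uniformly_stable U \<longleftrightarrow>
     (\<forall>\<epsilon>>0. \<exists>\<delta>>0. \<forall>s0\<ge>0. \<forall>x0. norm x0 < \<delta> \<longrightarrow>
        (\<forall>t\<ge>s0. norm (U t s0 *v x0) < \<epsilon>))"

definition uniformly_asymptotically_stable :: "(real \<Rightarrow> real \<Rightarrow> 'n::finite mat) \<Rightarrow> bool" where
  "uniformly_asymptotically_stable U \<longleftrightarrow> uniformly_stable U \<and>
     (\<exists>\<delta>0>0. \<forall>\<epsilon>>0. \<exists>T\<ge>0. \<forall>s0\<ge>0. \<forall>x0. norm x0 < \<delta>0 \<longrightarrow>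
        (\<forall>t\<ge>s0 + T. norm (U t s0 *v x0) < \<epsilon>))"

end

theory Submission
  imports Defs
begin

text \<open>
  Uniform asymptotic stability gives a bound \<open>\<parallel>U(t,s)\<parallel> \<le> M\<close> (uniform stability) and a time \<open>T\<close>
  with \<open>\<parallel>U(s+T,s)\<parallel> \<le> 1/2\<close> (uniform attractivity). The cocycle law \<open>U(t,s) = U(t,r) U(r,s)\<close>,
  \<open>s \<le> r \<le> t\<close>, turns these into \<open>\<parallel>U(t,s)\<parallel> \<le> M 2\<^sup>-\<^sup>k\<close> with \<open>k = \<lfloor>(t-s)/T\<rfloor>\<close>, an exponential bound;
  the converse is immediate.

  The cocycle law is forward uniqueness of solutions: for a solution vanishing at \<open>r\<close>, consider the
  supremum \<open>t\<^sub>0\<close> of the times up to which it vanishes. The jump relation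
  \<open>x(t\<^sub>0) - x(t\<^sub>0-) = \<Delta>\<^sup>-A(t\<^sub>0) x(t\<^sub>0)\<close> and the invertibility of \<open>I - \<Delta>\<^sup>-A(t\<^sub>0)\<close> give \<open>x(t\<^sub>0) = 0\<close>;
  just to the right of \<open>t\<^sub>0\<close> the variation of \<open>A\<close> is below \<open>1/2\<close>, so the supremum of \<open>\<parallel>x\<parallel>\<close>
  there is at most half of itself, hence zero, contradicting maximality of \<open>t\<^sub>0\<close>.
\<close>

section \<open>Operator norm of matrices\<close>

lemma opnorm_nonneg: "0 \<le> opnorm (M::'n::finite mat)"
  unfolding opnorm_def by (rule onorm_pos_le) simp

lemma norm_matrix_vector_mult_le_opnorm: "norm (M *v x) \<le> opnorm (M::'n::finite mat) * norm x"
  unfolding opnorm_def by (rule onorm) simp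

lemma opnorm_matrix_mult_le: "opnorm ((M::'n::finite mat) ** N) \<le> opnorm M * opnorm N"
proof -
  have "(\<lambda>x. (M ** N) *v x) = (\<lambda>x. M *v x) \<circ> (\<lambda>x. N *v x)"
    by (auto simp: matrix_vector_mul_assoc)
  then show ?thesis unfolding opnorm_def
    by (metis onorm_compose matrix_vector_mul_bounded_linear)
qed

lemma opnorm_le_norm: "opnorm (M::'n::finite mat) \<le> real CARD('n) * real CARD('n) * norm M"
  unfolding opnorm_def
proof (rule onorm_le_matrix_component)
  fix i j
  have "\<bar>M $ i $ j\<bar> \<le> norm (M $ i)" by (rule component_le_norm_cart)
  also have "\<dots> \<le> norm M" by (rule Finite_Cartesian_Product.norm_nth_le)
  finally show "\<bar>M $ i $ j\<bar> \<le> norm M" .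
qed

lemma norm_le_opnorm: "norm (M::'n::finite mat) \<le> real CARD('n) * real CARD('n) * opnorm M"
proof -
  have "norm M \<le> (\<Sum>i\<in>UNIV. norm (M $ i))" unfolding norm_vec_def by (rule L2_set_le_sum) simp
  also have "\<dots> \<le> (\<Sum>i\<in>(UNIV::'n set). \<Sum>j\<in>(UNIV::'n set). \<bar>M $ i $ j\<bar>)"
    by (rule sum_mono) (simp add: norm_le_l1_cart)
  also have "\<dots> \<le> (\<Sum>i\<in>(UNIV::'n set). \<Sum>j\<in>(UNIV::'n set). opnorm M)"
    by (intro sum_mono) (simp add: opnorm_def matrix_component_le_onorm)
  also have "\<dots> = real CARD('n) * real CARD('n) * opnorm M" by simp
  finally show ?thesis .
qed

lemma opnorm_le_of_ball_bound:
  fixes M :: "'n::finite mat"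
  assumes d: "d > 0" and bound: "\<And>x. norm x < d \<Longrightarrow> norm (M *v x) < c"
  shows "opnorm M \<le> 2 * c / d"
  unfolding opnorm_def
proof (rule onorm_le)
  fix x :: "real^'n"
  show "norm (M *v x) \<le> 2 * c / d * norm x"
  proof (cases "x = 0")
    case True then show ?thesis by simp
  next
    case False
    then have nx: "norm x > 0" by simp
    define k where "k = d / (2 * norm x)"
    have k: "k > 0" unfolding k_def using d nx by simp
    have "norm (k *\<^sub>R x) = d / 2" unfolding k_def using nx d by simp
    then have "norm (M *v (k *\<^sub>R x)) < c" using bound d by simp
    then have "k * norm (M *v x) < c" using k by (simp add: matrix_vector_mult_scaleR)
    then have "norm (M *v x) < c / k" using k by (simp add: field_simps)
    also have "c / k = 2 * c / d * norm x" unfolding k_def using d nx by (simp add: field_simps)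
    finally show ?thesis by simp
  qed
qed

lemma bounded_linear_matrix_vector_mult_left: "bounded_linear (\<lambda>M::'n::finite mat. M *v v)"
proof (rule linear_conv_bounded_linear[THEN iffD1], rule linearI)
  fix M N :: "'n mat" and c :: real
  show "(M + N) *v v = M *v v + N *v v" by (rule matrix_vector_mult_add_rdistrib)
  show "(c *\<^sub>R M) *v v = c *\<^sub>R (M *v v)"
    by (simp add: vec_eq_iff matrix_vector_mult_def sum_distrib_left mult.assoc)
qed

lemma sum_matrix_vector_mult: "(\<Sum>i\<in>S. f i) *v (w::real^'n::finite) = (\<Sum>i\<in>S. (f i :: 'n mat) *v w)"
  by (induction S rule: infinite_finite_induct) (auto simp: matrix_vector_mult_add_rdistrib)

lemma norm_diff_diff_le: "norm (a - b - c) \<le> norm a + norm b + norm (c::'a::real_normed_vector)"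
  by (metis add_right_mono norm_triangle_ineq4 order_trans)

section \<open>The Kurzweil--Stieltjes integral of vector functions\<close>

lemma tagged_division_pieceE:
  assumes "D tagged_division_of {a..b::real}" "(\<tau>,K) \<in> D"
  obtains u v where "K = {u..v}" "u \<le> \<tau>" "\<tau> \<le> v" "a \<le> u" "v \<le> b"
proof -
  obtain u v where K: "K = cbox u v" using tagged_division_ofD(4)[OF assms] by blast
  have "\<tau> \<in> K" "K \<subseteq> {a..b}" using tagged_division_ofD(2,3)[OF assms] by auto
  then show ?thesis using that[of u v] K by auto
qed

lemma division_pieceE:
  assumes "D division_of {a..b::real}" "K \<in> D"
  obtains u v where "K = {u..v}" "u \<le> v" "a \<le> u" "v \<le> b"
proof -
  obtain u v where K: "K = cbox u v" "K \<noteq> {}" "K \<subseteq> {a..b}"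
    using division_ofD(2,3,4)[OF assms(1) assms(2)] by metis
  then show ?thesis using that[of u v] by auto
qed

lemma fine_division_exists_real_Int:
  assumes "gauge \<gamma>\<^sub>1" "gauge \<gamma>\<^sub>2"
  obtains D where "D tagged_division_of {a..b::real}" "\<gamma>\<^sub>1 fine D" "\<gamma>\<^sub>2 fine D"
proof -
  obtain D where "D tagged_division_of {a..b}" "(\<lambda>x. \<gamma>\<^sub>1 x \<inter> \<gamma>\<^sub>2 x) fine D"
    using fine_division_exists_real[OF gauge_Int[OF assms]] by blast
  then show ?thesis using that fine_Int by blast
qed

definition ks_sum :: "(real \<Rightarrow> 'n::finite mat) \<Rightarrow> (real \<Rightarrow> real^'n) \<Rightarrow> (real \<times> real set) set \<Rightarrow> real^'n" where
  "ks_sum A y D = (\<Sum>(\<tau>,K)\<in>D. (A (Sup K) - A (Inf K)) *v y \<tau>)"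

definition ks_has_vec_integral ::
  "(real \<Rightarrow> 'n::finite mat) \<Rightarrow> (real \<Rightarrow> real^'n) \<Rightarrow> real^'n \<Rightarrow> real \<Rightarrow> real \<Rightarrow> bool" where
  "ks_has_vec_integral A y I a b \<longleftrightarrow> a \<le> b \<and>
     (\<forall>e>0. \<exists>\<gamma>. gauge \<gamma> \<and> (\<forall>D. D tagged_division_of {a..b} \<and> \<gamma> fine D \<longrightarrow> norm (ks_sum A y D - I) < e))"

lemma ks_sum_singleton [simp]: "ks_sum A y {(\<tau>, K)} = (A (Sup K) - A (Inf K)) *v y \<tau>"
  by (simp add: ks_sum_def)

lemma ks_sum_diff: "ks_sum A (\<lambda>t. f t - g t) D = ks_sum A f D - ks_sum A g D"
  unfolding ks_sum_def by (simp add: case_prod_unfold matrix_vector_mult_diff_distrib sum_subtractf)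

lemma ks_sum_union:
  assumes D\<^sub>1: "D\<^sub>1 tagged_division_of {a..c::real}" and D\<^sub>2: "D\<^sub>2 tagged_division_of {c..b}"
    and "a \<le> c" "c \<le> b"
  shows "(D\<^sub>1 \<union> D\<^sub>2) tagged_division_of {a..b}" "ks_sum A y (D\<^sub>1 \<union> D\<^sub>2) = ks_sum A y D\<^sub>1 + ks_sum A y D\<^sub>2"
proof -
  have "interior {a..c} \<inter> interior {c..b} = {}" by auto
  moreover have "{a..c} \<union> {c..b} = {a..b}" using assms(3,4) by auto
  ultimately show "(D\<^sub>1 \<union> D\<^sub>2) tagged_division_of {a..b}"
    using tagged_division_Un[OF D\<^sub>1 D\<^sub>2] by metis
  show "ks_sum A y (D\<^sub>1 \<union> D\<^sub>2) = ks_sum A y D\<^sub>1 + ks_sum A y D\<^sub>2"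
    unfolding ks_sum_def
  proof (rule sum.union_inter_neutral)
    show "finite D\<^sub>1" "finite D\<^sub>2" using D\<^sub>1 D\<^sub>2 by auto
    show "\<forall>x\<in>D\<^sub>1 \<inter> D\<^sub>2. (case x of (\<tau>, K) \<Rightarrow> (A (Sup K) - A (Inf K)) *v y \<tau>) = 0"
    proof (clarify)
      fix \<tau> K assume "(\<tau>, K) \<in> D\<^sub>1" "(\<tau>, K) \<in> D\<^sub>2"
      obtain u v where 1: "K = {u..v}" "u \<le> \<tau>" "\<tau> \<le> v" "v \<le> c"
        using tagged_division_pieceE[OF D\<^sub>1 \<open>(\<tau>, K) \<in> D\<^sub>1\<close>] by metis
      obtain u' v' where 2: "K = {u'..v'}" "u' \<le> \<tau>" "\<tau> \<le> v'" "c \<le> u'"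
        using tagged_division_pieceE[OF D\<^sub>2 \<open>(\<tau>, K) \<in> D\<^sub>2\<close>] by metis
      have "u = v" using 1 2 by (metis atLeastAtMost_iff dual_order.trans nle_le)
      then have "Sup K = Inf K" using 1 by simp
      then show "(A (Sup K) - A (Inf K)) *v y \<tau> = 0" by simp
    qed
  qed
qed

lemma ks_has_vec_integralD:
  assumes "ks_has_vec_integral A y I a b" "e > 0"
  obtains \<gamma> where "gauge \<gamma>"
    "\<And>D. D tagged_division_of {a..b} \<Longrightarrow> \<gamma> fine D \<Longrightarrow> norm (ks_sum A y D - I) < e"
  using assms unfolding ks_has_vec_integral_def by metis

lemma ks_has_vec_integral_trivial:
  assumes "ks_has_vec_integral A y I a a"
  shows "I = 0"
proof (rule ccontr)
  assume "I \<noteq> 0"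
  then obtain \<gamma> where g: "gauge \<gamma>"
    and close: "\<And>D. D tagged_division_of {a..a} \<Longrightarrow> \<gamma> fine D \<Longrightarrow> norm (ks_sum A y D - I) < norm I"
    using ks_has_vec_integralD[OF assms] by (metis zero_less_norm_iff)
  obtain D where D: "D tagged_division_of {a..a}" "\<gamma> fine D" using fine_division_exists_real[OF g] by blast
  have "ks_sum A y D = 0" unfolding ks_sum_def
  proof (rule sum.neutral, safe)
    fix \<tau> K assume "(\<tau>,K) \<in> D"
    then obtain u v where "K = {u..v}" "u \<le> \<tau>" "\<tau> \<le> v" "a \<le> u" "v \<le> a"
      by (rule tagged_division_pieceE[OF D(1)])
    then have "K = {a}" by simp
    then show "(A (Sup K) - A (Inf K)) *v y \<tau> = 0" by simp
  qed
  then show False using close[OF D] by simp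
qed

lemma ks_has_integral_imp_vec:
  fixes A :: "real \<Rightarrow> 'n::finite mat"
  assumes "ks_has_integral A F I a b"
  shows "ks_has_vec_integral A (\<lambda>t. F t *v w) (I *v w) a b"
  unfolding ks_has_vec_integral_def
proof (intro conjI allI impI)
  show "a \<le> b" using assms unfolding ks_has_integral_def by simp
  fix e :: real assume e: "e > 0"
  define C where "C = real CARD('n) * real CARD('n) * (norm w + 1)"
  have C: "C > 0" unfolding C_def by (intro mult_pos_pos) (auto intro: add_nonneg_pos)
  obtain \<gamma> where g: "gauge \<gamma>" and close: "\<And>D. D tagged_division_of {a..b} \<and> \<gamma> fine D \<Longrightarrow>
      norm ((\<Sum>(\<tau>,K)\<in>D. (A (Sup K) - A (Inf K)) ** F \<tau>) - I) < e / C"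
    using assms e C unfolding ks_has_integral_def by (meson divide_pos_pos)
  show "\<exists>\<gamma>. gauge \<gamma> \<and> (\<forall>D. D tagged_division_of {a..b} \<and> \<gamma> fine D \<longrightarrow>
      norm (ks_sum A (\<lambda>t. F t *v w) D - I *v w) < e)"
  proof (intro exI conjI allI impI)
    show "gauge \<gamma>" by fact
    fix D assume D: "D tagged_division_of {a..b} \<and> \<gamma> fine D"
    define X where "X = (\<Sum>(\<tau>,K)\<in>D. (A (Sup K) - A (Inf K)) ** F \<tau>)"
    have "ks_sum A (\<lambda>t. F t *v w) D = X *v w"
      unfolding ks_sum_def X_def sum_matrix_vector_mult
      by (simp add: case_prod_unfold matrix_vector_mul_assoc)
    then have "norm (ks_sum A (\<lambda>t. F t *v w) D - I *v w) = norm ((X - I) *v w)"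
      by (simp add: matrix_vector_mult_diff_rdistrib)
    also have "\<dots> \<le> opnorm (X - I) * norm w" by (rule norm_matrix_vector_mult_le_opnorm)
    also have "\<dots> \<le> (real CARD('n) * real CARD('n) * norm (X - I)) * norm w"
      by (rule mult_right_mono[OF opnorm_le_norm]) simp
    also have "\<dots> \<le> norm (X - I) * C"
      unfolding C_def by (simp add: mult_left_mono algebra_simps)
    also have "\<dots> < e / C * C"
      using close[OF D] C unfolding X_def by (intro mult_strict_right_mono) auto
    also have "\<dots> = e" using C by simp
    finally show "norm (ks_sum A (\<lambda>t. F t *v w) D - I *v w) < e" .
  qed
qed

lemma ks_has_vec_integral_diff:
  assumes "ks_has_vec_integral A f I a b" "ks_has_vec_integral A g J a b"
  shows "ks_has_vec_integral A (\<lambda>t. f t - g t) (I - J) a b"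
  unfolding ks_has_vec_integral_def
proof (intro conjI allI impI)
  show "a \<le> b" using assms unfolding ks_has_vec_integral_def by simp
  fix e :: real assume e: "e > 0"
  obtain \<gamma>\<^sub>1 where g1: "gauge \<gamma>\<^sub>1"
    "\<And>D. D tagged_division_of {a..b} \<Longrightarrow> \<gamma>\<^sub>1 fine D \<Longrightarrow> norm (ks_sum A f D - I) < e/2"
    using ks_has_vec_integralD[OF assms(1)] e by (metis half_gt_zero)
  obtain \<gamma>\<^sub>2 where g2: "gauge \<gamma>\<^sub>2"
    "\<And>D. D tagged_division_of {a..b} \<Longrightarrow> \<gamma>\<^sub>2 fine D \<Longrightarrow> norm (ks_sum A g D - J) < e/2"
    using ks_has_vec_integralD[OF assms(2)] e by (metis half_gt_zero)
  show "\<exists>\<gamma>. gauge \<gamma> \<and> (\<forall>D. D tagged_division_of {a..b} \<and> \<gamma> fine D \<longrightarrow>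
      norm (ks_sum A (\<lambda>t. f t - g t) D - (I - J)) < e)"
  proof (intro exI conjI allI impI)
    show "gauge (\<lambda>x. \<gamma>\<^sub>1 x \<inter> \<gamma>\<^sub>2 x)" by (rule gauge_Int[OF g1(1) g2(1)])
    fix D assume D: "D tagged_division_of {a..b} \<and> (\<lambda>x. \<gamma>\<^sub>1 x \<inter> \<gamma>\<^sub>2 x) fine D"
    then have "norm (ks_sum A f D - I) < e/2" "norm (ks_sum A g D - J) < e/2"
      using g1(2) g2(2) by (auto simp: fine_Int)
    moreover have "norm ((ks_sum A f D - I) - (ks_sum A g D - J))
        \<le> norm (ks_sum A f D - I) + norm (ks_sum A g D - J)" by (rule norm_triangle_ineq4)
    ultimately show "norm (ks_sum A (\<lambda>t. f t - g t) D - (I - J)) < e"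
      by (simp add: ks_sum_diff algebra_simps)
  qed
qed

lemma ks_sum_cauchy_nested_gauges:
  fixes A :: "real \<Rightarrow> 'n::finite mat"
  assumes cauchy: "\<And>e. e > 0 \<Longrightarrow> \<exists>\<gamma>. gauge \<gamma> \<and> (\<forall>D\<^sub>1 D\<^sub>2. D\<^sub>1 tagged_division_of {a..b} \<and> \<gamma> fine D\<^sub>1 \<and>
          D\<^sub>2 tagged_division_of {a..b} \<and> \<gamma> fine D\<^sub>2 \<longrightarrow> norm (ks_sum A y D\<^sub>1 - ks_sum A y D\<^sub>2) < e)"
  obtains G where "\<And>n. gauge (G n)" "\<And>m n D. m \<le> n \<Longrightarrow> G n fine D \<Longrightarrow> G m fine D"
    "\<And>n D\<^sub>1 D\<^sub>2. D\<^sub>1 tagged_division_of {a..b} \<Longrightarrow> G n fine D\<^sub>1 \<Longrightarrow>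
        D\<^sub>2 tagged_division_of {a..b} \<Longrightarrow> G n fine D\<^sub>2 \<Longrightarrow>
        norm (ks_sum A y D\<^sub>1 - ks_sum A y D\<^sub>2) < 1 / (real n + 1)"
proof -
  have "\<forall>n::nat. \<exists>\<gamma>. gauge \<gamma> \<and> (\<forall>D\<^sub>1 D\<^sub>2. D\<^sub>1 tagged_division_of {a..b} \<and> \<gamma> fine D\<^sub>1 \<and>
          D\<^sub>2 tagged_division_of {a..b} \<and> \<gamma> fine D\<^sub>2 \<longrightarrow>
          norm (ks_sum A y D\<^sub>1 - ks_sum A y D\<^sub>2) < 1 / (real n + 1))"
    using cauchy by simp
  then obtain g where g: "\<And>n. gauge (g n)"
    and close: "\<And>n D\<^sub>1 D\<^sub>2. D\<^sub>1 tagged_division_of {a..b} \<Longrightarrow> g n fine D\<^sub>1 \<Longrightarrow>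
          D\<^sub>2 tagged_division_of {a..b} \<Longrightarrow> g n fine D\<^sub>2 \<Longrightarrow>
          norm (ks_sum A y D\<^sub>1 - ks_sum A y D\<^sub>2) < 1 / (real n + 1)"
    by metis
  define G where "G n = (\<lambda>x. \<Inter>{g k x | k. k \<in> {..n}})" for n
  have fine_g: "g k fine D" if "G n fine D" "k \<le> n" for n k D
    using that unfolding G_def fine_Inter by auto
  show ?thesis
  proof (rule that)
    show "gauge (G n)" for n unfolding G_def by (rule gauge_Inter) (auto simp: g)
    show "G m fine D" if "m \<le> n" "G n fine D" for m n D
      using that unfolding G_def fine_Inter by auto
    show "norm (ks_sum A y D\<^sub>1 - ks_sum A y D\<^sub>2) < 1 / (real n + 1)"
      if "D\<^sub>1 tagged_division_of {a..b}" "G n fine D\<^sub>1" "D\<^sub>2 tagged_division_of {a..b}" "G n fine D\<^sub>2"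
      for n D\<^sub>1 D\<^sub>2
      using close[OF that(1) fine_g[OF that(2)] that(3) fine_g[OF that(4)]] by simp
  qed
qed

lemma ks_has_vec_integral_cauchy:
  fixes A :: "real \<Rightarrow> 'n::finite mat"
  assumes ab: "a \<le> b"
    and cauchy: "\<And>e. e > 0 \<Longrightarrow> \<exists>\<gamma>. gauge \<gamma> \<and> (\<forall>D\<^sub>1 D\<^sub>2. D\<^sub>1 tagged_division_of {a..b} \<and> \<gamma> fine D\<^sub>1 \<and>
          D\<^sub>2 tagged_division_of {a..b} \<and> \<gamma> fine D\<^sub>2 \<longrightarrow> norm (ks_sum A y D\<^sub>1 - ks_sum A y D\<^sub>2) < e)"
  obtains I where "ks_has_vec_integral A y I a b"
proof -
  obtain G where G: "\<And>n. gauge (G n)" and nested: "\<And>m n D. m \<le> n \<Longrightarrow> G n fine D \<Longrightarrow> G m fine D"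
    and close: "\<And>n D\<^sub>1 D\<^sub>2. D\<^sub>1 tagged_division_of {a..b} \<Longrightarrow> G n fine D\<^sub>1 \<Longrightarrow>
        D\<^sub>2 tagged_division_of {a..b} \<Longrightarrow> G n fine D\<^sub>2 \<Longrightarrow>
        norm (ks_sum A y D\<^sub>1 - ks_sum A y D\<^sub>2) < 1 / (real n + 1)"
    using ks_sum_cauchy_nested_gauges[OF cauchy] by blast
  have "\<forall>n. \<exists>D. D tagged_division_of {a..b} \<and> G n fine D"
    using fine_division_exists_real[OF G] by metis
  then obtain Dn where Dn: "\<And>n. Dn n tagged_division_of {a..b}" "\<And>n. G n fine Dn n" by metis
  define s where "s n = ks_sum A y (Dn n)" for n
  have s_close: "norm (ks_sum A y D - s n) < 1 / (real N + 1)"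
    if "D tagged_division_of {a..b}" "G N fine D" "N \<le> n" for D N n
    unfolding s_def using close[OF that(1,2) Dn(1) nested[OF that(3) Dn(2)]] .
  have s_cauchy: "norm (s m - s n) < 1 / (real N + 1)" if "N \<le> m" "N \<le> n" for m n N
    using s_close[OF Dn(1) nested[OF that(1) Dn(2)] that(2)] unfolding s_def .
  have "Cauchy s"
  proof (rule CauchyI)
    fix e :: real assume "e > 0"
    then obtain N :: nat where "1 / (real N + 1) < e"
      by (metis nat_approx_posE of_nat_Suc add.commute)
    then show "\<exists>M. \<forall>m\<ge>M. \<forall>n\<ge>M. norm (s m - s n) < e"
      using s_cauchy by (meson order_less_trans)
  qed
  then obtain I where I: "s \<longlonglongrightarrow> I" using Cauchy_convergent_iff convergent_def by blast
  have "ks_has_vec_integral A y I a b"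
    unfolding ks_has_vec_integral_def
  proof (intro conjI allI impI ab)
    fix e :: real assume e: "e > 0"
    then obtain N :: nat where N: "1 / (real N + 1) < e / 2"
      by (metis half_gt_zero nat_approx_posE of_nat_Suc add.commute)
    obtain N' where N': "\<And>n. n \<ge> N' \<Longrightarrow> norm (s n - I) < e / 2"
      using I e unfolding LIMSEQ_iff by (metis half_gt_zero)
    show "\<exists>\<gamma>. gauge \<gamma> \<and> (\<forall>D. D tagged_division_of {a..b} \<and> \<gamma> fine D \<longrightarrow> norm (ks_sum A y D - I) < e)"
    proof (intro exI conjI allI impI)
      fix D assume D: "D tagged_division_of {a..b} \<and> G N fine D"
      have "norm (ks_sum A y D - s (max N N')) < e / 2"
        using s_close[of D N "max N N'"] D N by simp
      moreover have "norm (s (max N N') - I) < e / 2" using N' by simp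
      ultimately show "norm (ks_sum A y D - I) < e"
        using norm_diff_triangle_less by fastforce
    qed (rule G)
  qed
  then show ?thesis by (rule that)
qed

lemma ks_has_vec_integral_tail_exists:
  fixes A :: "real \<Rightarrow> 'n::finite mat"
  assumes int: "ks_has_vec_integral A y I a b" and "a \<le> c" "c \<le> b"
  obtains J where "ks_has_vec_integral A y J c b"
proof (rule ks_has_vec_integral_cauchy[OF \<open>c \<le> b\<close>])
  fix e :: real assume e: "e > 0"
  obtain \<gamma> where g: "gauge \<gamma>"
    "\<And>D. D tagged_division_of {a..b} \<Longrightarrow> \<gamma> fine D \<Longrightarrow> norm (ks_sum A y D - I) < e/2"
    using ks_has_vec_integralD[OF int] e by (metis half_gt_zero)
  obtain D\<^sub>0 where D\<^sub>0: "D\<^sub>0 tagged_division_of {a..c}" "\<gamma> fine D\<^sub>0"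
    using fine_division_exists_real[OF g(1)] by blast
  have close: "norm (ks_sum A y D\<^sub>0 + ks_sum A y D - I) < e/2"
    if "D tagged_division_of {c..b}" "\<gamma> fine D" for D
    using ks_sum_union[OF D\<^sub>0(1) that(1) assms(2,3)] g(2) fine_Un[OF D\<^sub>0(2) that(2)] by metis
  show "\<exists>\<gamma>. gauge \<gamma> \<and> (\<forall>D\<^sub>1 D\<^sub>2. D\<^sub>1 tagged_division_of {c..b} \<and> \<gamma> fine D\<^sub>1 \<and>
        D\<^sub>2 tagged_division_of {c..b} \<and> \<gamma> fine D\<^sub>2 \<longrightarrow> norm (ks_sum A y D\<^sub>1 - ks_sum A y D\<^sub>2) < e)"
  proof (intro exI conjI allI impI)
    fix D\<^sub>1 D\<^sub>2 assume "D\<^sub>1 tagged_division_of {c..b} \<and> \<gamma> fine D\<^sub>1 \<and> D\<^sub>2 tagged_division_of {c..b} \<and> \<gamma> fine D\<^sub>2"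
    then have "norm (ks_sum A y D\<^sub>0 + ks_sum A y D\<^sub>1 - I) < e/2" "norm (ks_sum A y D\<^sub>0 + ks_sum A y D\<^sub>2 - I) < e/2"
      using close by blast+
    then show "norm (ks_sum A y D\<^sub>1 - ks_sum A y D\<^sub>2) < e"
      using norm_diff_triangle_less[of "ks_sum A y D\<^sub>0 + ks_sum A y D\<^sub>1" I "e/2"
          "ks_sum A y D\<^sub>0 + ks_sum A y D\<^sub>2" "e/2"]
      by (simp add: norm_minus_commute)
  qed (rule g(1))
qed

lemma ks_has_vec_integral_tail:
  fixes A :: "real \<Rightarrow> 'n::finite mat"
  assumes I\<^sub>1: "ks_has_vec_integral A y I\<^sub>1 a c" and I\<^sub>2: "ks_has_vec_integral A y I\<^sub>2 a b" and cb: "c \<le> b"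
  shows "ks_has_vec_integral A y (I\<^sub>2 - I\<^sub>1) c b"
proof -
  have ac: "a \<le> c" using I\<^sub>1 unfolding ks_has_vec_integral_def by simp
  obtain J where J: "ks_has_vec_integral A y J c b"
    using ks_has_vec_integral_tail_exists[OF I\<^sub>2 ac cb] by blast
  have "J = I\<^sub>2 - I\<^sub>1"
  proof (rule ccontr)
    assume "J \<noteq> I\<^sub>2 - I\<^sub>1"
    define e where "e = norm (J - (I\<^sub>2 - I\<^sub>1)) / 3"
    have e: "e > 0" using \<open>J \<noteq> I\<^sub>2 - I\<^sub>1\<close> unfolding e_def by simp
    obtain g1 where g1: "gauge g1"
      "\<And>D. D tagged_division_of {a..c} \<Longrightarrow> g1 fine D \<Longrightarrow> norm (ks_sum A y D - I\<^sub>1) < e"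
      using ks_has_vec_integralD[OF I\<^sub>1 e] by blast
    obtain g2 where g2: "gauge g2"
      "\<And>D. D tagged_division_of {a..b} \<Longrightarrow> g2 fine D \<Longrightarrow> norm (ks_sum A y D - I\<^sub>2) < e"
      using ks_has_vec_integralD[OF I\<^sub>2 e] by blast
    obtain g3 where g3: "gauge g3"
      "\<And>D. D tagged_division_of {c..b} \<Longrightarrow> g3 fine D \<Longrightarrow> norm (ks_sum A y D - J) < e"
      using ks_has_vec_integralD[OF J e] by blast
    obtain DL where DL: "DL tagged_division_of {a..c}" "g1 fine DL" "g2 fine DL"
      using fine_division_exists_real_Int[OF g1(1) g2(1)] by blast
    obtain DR where DR: "DR tagged_division_of {c..b}" "g3 fine DR" "g2 fine DR"
      using fine_division_exists_real_Int[OF g3(1) g2(1)] by blast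
    have "norm (ks_sum A y DL + ks_sum A y DR - I\<^sub>2) < e"
      using ks_sum_union[OF DL(1) DR(1) ac cb] g2(2) fine_Un[OF DL(3) DR(3)] by metis
    moreover have "J - (I\<^sub>2 - I\<^sub>1) =
        (ks_sum A y DL + ks_sum A y DR - I\<^sub>2) - (ks_sum A y DL - I\<^sub>1) - (ks_sum A y DR - J)"
      by (simp add: algebra_simps)
    then have "norm (J - (I\<^sub>2 - I\<^sub>1)) \<le> norm (ks_sum A y DL + ks_sum A y DR - I\<^sub>2)
        + norm (ks_sum A y DL - I\<^sub>1) + norm (ks_sum A y DR - J)"
      using norm_diff_diff_le by metis
    ultimately have "norm (J - (I\<^sub>2 - I\<^sub>1)) < 3 * e"
      using g1(2)[OF DL(1,2)] g3(2)[OF DR(1,2)] by linarith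
    then show False unfolding e_def by simp
  qed
  then show ?thesis using J by simp
qed

section \<open>The variation function\<close>

definition variation :: "(real \<Rightarrow> 'n::finite mat) \<Rightarrow> real \<Rightarrow> real" where
  "variation A t = Sup {(\<Sum>K\<in>D. opnorm (A (Sup K) - A (Inf K))) | D. D division_of {0..t}}"

lemma variation_division_le:
  assumes bv: "locally_bv_J A" and "0 \<le> v" "v \<le> s" and D: "D division_of {v..s}"
  shows "(\<Sum>K\<in>D. opnorm (A (Sup K) - A (Inf K))) \<le> variation A s - variation A v"
proof -
  let ?var = "\<lambda>D. \<Sum>K\<in>D. opnorm (A (Sup K) - A (Inf K))"
  let ?S = "\<lambda>t. {?var D | D. D division_of {0..t}}"
  have bdd: "bdd_above (?S s)"
    using bv assms(2,3) unfolding locally_bv_J_def bv_on_def by auto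
  have ne: "?S v \<noteq> {}" using division_of_self[of 0 v] assms(2) by auto
  have "?var D\<^sub>0 \<le> variation A s - ?var D" if D\<^sub>0: "D\<^sub>0 division_of {0..v}" for D\<^sub>0
  proof -
    have "interior {0..v} \<inter> interior {v..s} = {}" by auto
    moreover have "{0..v} \<union> {v..s} = {0..s}" using assms by auto
    ultimately have U: "(D\<^sub>0 \<union> D) division_of {0..s}"
      using division_disjoint_union[OF D\<^sub>0 D] by metis
    have "?var (D\<^sub>0 \<union> D) = ?var D\<^sub>0 + ?var D"
    proof (rule sum.union_inter_neutral)
      show "finite D\<^sub>0" "finite D" using D\<^sub>0 D by auto
      show "\<forall>K\<in>D\<^sub>0 \<inter> D. opnorm (A (Sup K) - A (Inf K)) = 0"
      proof
        fix K assume K: "K \<in> D\<^sub>0 \<inter> D"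
        obtain u w where 1: "K = {u..w}" "u \<le> w" "w \<le> v"
          using division_pieceE[OF D\<^sub>0] K by blast
        obtain u' w' where 2: "K = {u'..w'}" "u' \<le> w'" "v \<le> u'"
          using division_pieceE[OF D] K by blast
        have "u = w" using 1 2 by (metis atLeastAtMost_iff dual_order.trans nle_le)
        then show "opnorm (A (Sup K) - A (Inf K)) = 0" using 1 by (simp add: opnorm_def onorm_zero)
      qed
    qed
    moreover have "?var (D\<^sub>0 \<union> D) \<le> variation A s"
      unfolding variation_def by (rule cSup_upper[OF _ bdd]) (use U in blast)
    ultimately show ?thesis by simp
  qed
  then have "variation A v \<le> variation A s - ?var D"
    unfolding variation_def[of A v] by (intro cSup_least[OF ne]) blast
  then show ?thesis by simp
qed

lemma opnorm_diff_le_variation: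
  assumes "locally_bv_J A" and "0 \<le> v" "v \<le> s"
  shows "opnorm (A s - A v) \<le> variation A s - variation A v"
proof -
  have "{{v..s}} division_of {v..s}" using division_of_self[of v s] assms by auto
  from variation_division_le[OF assms this] show ?thesis using assms by simp
qed

lemma variation_mono:
  assumes "locally_bv_J A" and "0 \<le> v" "v \<le> s"
  shows "variation A v \<le> variation A s"
  using opnorm_diff_le_variation[OF assms] opnorm_nonneg[of "A s - A v"] by linarith

lemma norm_ks_sum_le_variation:
  assumes bv: "locally_bv_J A" and "0 \<le> v" "v \<le> s" and D: "D tagged_division_of {v..s}"
    and B: "\<And>t. v \<le> t \<Longrightarrow> t \<le> s \<Longrightarrow> norm (y t) \<le> B"
  shows "norm (ks_sum A y D) \<le> B * (variation A s - variation A v)"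
proof -
  let ?var = "\<lambda>K. opnorm (A (Sup K) - A (Inf K))"
  have B0: "0 \<le> B" using B[of v] assms(3) by (meson norm_ge_zero order_trans order_refl)
  have "norm (ks_sum A y D) \<le> (\<Sum>(\<tau>,K)\<in>D. norm ((A (Sup K) - A (Inf K)) *v y \<tau>))"
    unfolding ks_sum_def by (rule norm_sum[THEN order_trans]) (simp add: case_prod_unfold)
  also have "\<dots> \<le> (\<Sum>(\<tau>,K)\<in>D. B * ?var K)"
  proof (rule sum_mono, safe)
    fix \<tau> K assume "(\<tau>,K) \<in> D"
    then obtain u w where "K = {u..w}" "u \<le> \<tau>" "\<tau> \<le> w" "v \<le> u" "w \<le> s"
      using tagged_division_pieceE[OF D] by blast
    then have "norm (y \<tau>) \<le> B" using B by auto
    have "norm ((A (Sup K) - A (Inf K)) *v y \<tau>) \<le> ?var K * norm (y \<tau>)"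
      by (rule norm_matrix_vector_mult_le_opnorm)
    also have "\<dots> \<le> ?var K * B" by (rule mult_left_mono[OF \<open>norm (y \<tau>) \<le> B\<close> opnorm_nonneg])
    finally show "norm ((A (Sup K) - A (Inf K)) *v y \<tau>) \<le> B * ?var K" by (simp add: mult.commute)
  qed
  also have "\<dots> = B * (\<Sum>(\<tau>,K)\<in>D. if K = {} then 0 else ?var K)"
    unfolding sum_distrib_left
    by (intro sum.cong refl) (auto dest: tagged_division_ofD(2)[OF D])
  also have "(\<Sum>(\<tau>,K)\<in>D. if K = {} then 0 else ?var K) = (\<Sum>K\<in>snd ` D. if K = {} then 0 else ?var K)"
  proof (rule sum.over_tagged_division_lemma[OF D])
    fix u v :: real assume "box u v = {}"
    then have "v \<le> u" by (simp add: not_less)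
    then show "(if cbox u v = {} then 0 else ?var (cbox u v)) = 0"
      by (cases "u = v") (simp_all add: opnorm_def onorm_zero)
  qed
  also have "\<dots> = (\<Sum>K\<in>snd ` D. ?var K)"
    by (intro sum.cong refl) (auto dest: tagged_division_ofD(2)[OF D])
  also have "\<dots> \<le> variation A s - variation A v"
    by (rule variation_division_le[OF bv assms(2,3) division_of_tagged_division[OF D]])
  finally show ?thesis using B0 by (simp add: mult_left_mono)
qed

lemma locally_bv_cauchy_at_left:
  fixes A :: "real \<Rightarrow> 'n::finite mat"
  assumes bv: "locally_bv_J A" and "t > 0" "e > 0"
  obtains u where "u < t" "\<And>x y. u < x \<Longrightarrow> x \<le> y \<Longrightarrow> y < t \<Longrightarrow> dist (A x) (A y) < e"
proof -
  define C where "C = real CARD('n) * real CARD('n)"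
  have C: "C > 0" unfolding C_def by simp
  define w where "w = Sup (variation A ` {0..<t})"
  have bdd: "bdd_above (variation A ` {0..<t})"
    by (rule bdd_aboveI[of _ "variation A t"]) (use variation_mono[OF bv] in auto)
  have "w - e / C < w" using \<open>e > 0\<close> C by simp
  moreover have "variation A ` {0..<t} \<noteq> {}" using \<open>t > 0\<close> by auto
  ultimately obtain z where "z \<in> variation A ` {0..<t}" "w - e / C < z"
    unfolding w_def by (rule less_cSupE)
  then obtain u where u: "u \<in> {0..<t}" "w - e / C < variation A u" by blast
  have "dist (A x) (A y) < e" if "u < x" "x \<le> y" "y < t" for x y
  proof -
    have "variation A y \<le> w" unfolding w_def by (rule cSup_upper) (use that u bdd in auto)
    have "dist (A x) (A y) = norm (A y - A x)" by (simp add: dist_norm norm_minus_commute)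
    also have "\<dots> \<le> C * opnorm (A y - A x)" unfolding C_def by (rule norm_le_opnorm)
    also have "\<dots> \<le> C * (variation A y - variation A u)"
      using opnorm_diff_le_variation[OF bv _ that(2)] variation_mono[OF bv, of u x] u that C
      by auto
    also have "\<dots> < C * (e / C)"
      using \<open>variation A y \<le> w\<close> u C by (intro mult_strict_left_mono) auto
    also have "\<dots> = e" using C by simp
    finally show ?thesis .
  qed
  with u show ?thesis using that by auto
qed

lemma locally_bv_left_limit:
  fixes A :: "real \<Rightarrow> 'n::finite mat"
  assumes bv: "locally_bv_J A" and "t > 0"
  obtains L where "(A \<longlongrightarrow> L) (at_left t)"
proof -
  have "cauchy_filter (filtermap A (at_left t))"
    unfolding cauchy_filter_metric_filtermap
  proof (intro allI impI)
    fix e :: real assume "e > 0"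
    then obtain u where "u < t" and close: "\<And>x y. u < x \<Longrightarrow> x \<le> y \<Longrightarrow> y < t \<Longrightarrow> dist (A x) (A y) < e"
      using locally_bv_cauchy_at_left[OF bv \<open>t > 0\<close>] by blast
    show "\<exists>P. eventually P (at_left t) \<and> (\<forall>x y. P x \<and> P y \<longrightarrow> dist (A x) (A y) < e)"
    proof (intro exI conjI allI impI)
      show "eventually (\<lambda>x. x \<in> {u<..<t}) (at_left t)"
        using \<open>u < t\<close> by (intro eventually_at_left_real) auto
      fix x y assume "x \<in> {u<..<t} \<and> y \<in> {u<..<t}"
      then show "dist (A x) (A y) < e"
        using close[of x y] close[of y x] by (cases "x \<le> y") (auto simp: dist_commute)
    qed
  qed
  then obtain L where "filtermap A (at_left t) \<le> nhds L"
    using cauchy_filter_complete_converges[OF _ complete_UNIV] by (force simp: filtermap_bot_iff)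
  then show ?thesis using that unfolding filterlim_def by blast
qed

lemma variation_small_right:
  assumes bv: "locally_bv_J A" and "0 \<le> t\<^sub>0" "t\<^sub>0 < t\<^sub>1" and e: "e > 0"
  obtains u where "t\<^sub>0 < u" "u \<le> t\<^sub>1"
    "\<And>v s. t\<^sub>0 < v \<Longrightarrow> v \<le> s \<Longrightarrow> s \<le> u \<Longrightarrow> variation A s - variation A v < e"
proof -
  define m where "m = Inf (variation A ` {t\<^sub>0<..t\<^sub>1})"
  have ne: "variation A ` {t\<^sub>0<..t\<^sub>1} \<noteq> {}" using assms by auto
  have bdd: "bdd_below (variation A ` {t\<^sub>0<..t\<^sub>1})"
    by (rule bdd_belowI[of _ "variation A t\<^sub>0"]) (use variation_mono[OF bv] assms in auto)
  obtain u where u: "u \<in> {t\<^sub>0<..t\<^sub>1}" "variation A u < m + e"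
    using cInf_lessD[OF ne, of "m + e"] e unfolding m_def by auto
  have "variation A s - variation A v < e" if "t\<^sub>0 < v" "v \<le> s" "s \<le> u" for v s
  proof -
    have "m \<le> variation A v" unfolding m_def by (rule cInf_lower) (use that u bdd in auto)
    moreover have "variation A s \<le> variation A u" using variation_mono[OF bv _ that(3)] that assms by simp
    ultimately show ?thesis using u by simp
  qed
  then show ?thesis using that u by auto
qed

section \<open>Uniqueness of solutions\<close>

definition ks_solution :: "(real \<Rightarrow> 'n::finite mat) \<Rightarrow> (real \<Rightarrow> real^'n) \<Rightarrow> real \<Rightarrow> bool" where
  "ks_solution A y r \<longleftrightarrow> (\<forall>c t. r \<le> c \<longrightarrow> c \<le> t \<longrightarrow> ks_has_vec_integral A y (y t - y c) c t)"

lemma ks_solutionD: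
  "ks_solution A y r \<Longrightarrow> r \<le> c \<Longrightarrow> c \<le> t \<Longrightarrow> ks_has_vec_integral A y (y t - y c) c t"
  unfolding ks_solution_def by blast

lemma ks_solution_mono: "ks_solution A y r \<Longrightarrow> r \<le> r' \<Longrightarrow> ks_solution A y r'"
  unfolding ks_solution_def by simp

lemma ks_solution_diff:
  assumes "ks_solution A f r" "ks_solution A g r"
  shows "ks_solution A (\<lambda>t. f t - g t) r"
  unfolding ks_solution_def
proof (intro allI impI)
  fix c t assume "r \<le> c" "c \<le> t"
  from ks_has_vec_integral_diff[OF ks_solutionD[OF assms(1) this] ks_solutionD[OF assms(2) this]]
  show "ks_has_vec_integral A (\<lambda>t. f t - g t) ((f t - g t) - (f c - g c)) c t"
    by (simp add: algebra_simps)
qed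

text \<open>A single-piece Saks--Henstock lemma: the piece \<open>[u,v]\<close> is completed to a fine division of
  \<open>[r,b]\<close> by fine divisions of \<open>[r,u]\<close> and \<open>[v,b]\<close> that approximate their own integrals.\<close>

lemma ks_solution_local_estimate:
  fixes A :: "real \<Rightarrow> 'n::finite mat"
  assumes sol: "ks_solution A y r" and rb: "r \<le> b" and e: "e > 0"
  obtains \<gamma> where "gauge \<gamma>"
    "\<And>u v \<tau>. r \<le> u \<Longrightarrow> u \<le> \<tau> \<Longrightarrow> \<tau> \<le> v \<Longrightarrow> v \<le> b \<Longrightarrow> {u..v} \<subseteq> \<gamma> \<tau> \<Longrightarrow>
        norm ((A v - A u) *v y \<tau> - (y v - y u)) \<le> e"
proof -
  obtain \<gamma> where g: "gauge \<gamma>"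
    "\<And>D. D tagged_division_of {r..b} \<Longrightarrow> \<gamma> fine D \<Longrightarrow> norm (ks_sum A y D - (y b - y r)) < e"
    using ks_has_vec_integralD[OF ks_solutionD[OF sol order_refl rb] e] by blast
  have "norm ((A v - A u) *v y \<tau> - (y v - y u)) \<le> e"
    if uv: "r \<le> u" "u \<le> \<tau>" "\<tau> \<le> v" "v \<le> b" "{u..v} \<subseteq> \<gamma> \<tau>" for u v \<tau>
  proof (rule field_le_epsilon)
    fix \<eta> :: real assume "\<eta> > 0"
    then have \<eta>: "\<eta>/2 > 0" by simp
    have ru: "r \<le> u" and uv': "u \<le> v" and rv: "r \<le> v" using uv by linarith+
    obtain \<gamma>\<^sub>L where gL: "gauge \<gamma>\<^sub>L"
      "\<And>D. D tagged_division_of {r..u} \<Longrightarrow> \<gamma>\<^sub>L fine D \<Longrightarrow> norm (ks_sum A y D - (y u - y r)) < \<eta>/2"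
      using ks_has_vec_integralD[OF ks_solutionD[OF sol order_refl ru] \<eta>] by blast
    obtain \<gamma>\<^sub>R where gR: "gauge \<gamma>\<^sub>R"
      "\<And>D. D tagged_division_of {v..b} \<Longrightarrow> \<gamma>\<^sub>R fine D \<Longrightarrow> norm (ks_sum A y D - (y b - y v)) < \<eta>/2"
      using ks_has_vec_integralD[OF ks_solutionD[OF sol rv uv(4)] \<eta>] by blast
    obtain DL where DL: "DL tagged_division_of {r..u}" "\<gamma> fine DL" "\<gamma>\<^sub>L fine DL"
      using fine_division_exists_real_Int[OF g(1) gL(1)] by blast
    obtain DR where DR: "DR tagged_division_of {v..b}" "\<gamma> fine DR" "\<gamma>\<^sub>R fine DR"
      using fine_division_exists_real_Int[OF g(1) gR(1)] by blast
    define P where "P = {(\<tau>, {u..v})}"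
    have P: "P tagged_division_of {u..v}" unfolding P_def
      by (rule tagged_division_of_self_real) (use uv in auto)
    have "\<gamma> fine P" unfolding P_def fine_def using uv(5) by auto
    have sum_P: "ks_sum A y P = (A v - A u) *v y \<tau>" unfolding P_def using uv' by simp
    have T1: "(DL \<union> P) tagged_division_of {r..v}" "ks_sum A y (DL \<union> P) = ks_sum A y DL + ks_sum A y P"
      using ks_sum_union[OF DL(1) P ru uv'] by auto
    have T2: "(DL \<union> P \<union> DR) tagged_division_of {r..b}"
      "ks_sum A y (DL \<union> P \<union> DR) = ks_sum A y (DL \<union> P) + ks_sum A y DR"
      using ks_sum_union[OF T1(1) DR(1) rv uv(4)] by auto
    have "\<gamma> fine (DL \<union> P \<union> DR)" using DL DR \<open>\<gamma> fine P\<close> by (intro fine_Un)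
    then have "norm (ks_sum A y DL + ks_sum A y P + ks_sum A y DR - (y b - y r)) < e"
      using g(2)[OF T2(1)] T2(2) T1(2) by simp
    moreover have "(A v - A u) *v y \<tau> - (y v - y u)
        = (ks_sum A y DL + ks_sum A y P + ks_sum A y DR - (y b - y r))
          - (ks_sum A y DL - (y u - y r)) - (ks_sum A y DR - (y b - y v))"
      using sum_P by (simp add: algebra_simps)
    then have "norm ((A v - A u) *v y \<tau> - (y v - y u))
        \<le> norm (ks_sum A y DL + ks_sum A y P + ks_sum A y DR - (y b - y r))
          + norm (ks_sum A y DL - (y u - y r)) + norm (ks_sum A y DR - (y b - y v))"
      using norm_diff_diff_le by metis
    ultimately show "norm ((A v - A u) *v y \<tau> - (y v - y u)) \<le> e + \<eta>"
      using gL(2)[OF DL(1,3)] gR(2)[OF DR(1,3)] by linarith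
  qed
  with g(1) show ?thesis by (rule that)
qed

lemma ks_solution_bounded:
  fixes A :: "real \<Rightarrow> 'n::finite mat"
  assumes bv: "locally_bv_J A" and sol: "ks_solution A y r" and "0 \<le> r" "r \<le> b"
  obtains B where "\<And>t. r \<le> t \<Longrightarrow> t \<le> b \<Longrightarrow> norm (y t) \<le> B"
proof -
  obtain \<gamma> where g: "gauge \<gamma>"
    "\<And>u v \<tau>. r \<le> u \<Longrightarrow> u \<le> \<tau> \<Longrightarrow> \<tau> \<le> v \<Longrightarrow> v \<le> b \<Longrightarrow> {u..v} \<subseteq> \<gamma> \<tau> \<Longrightarrow>
        norm ((A v - A u) *v y \<tau> - (y v - y u)) \<le> 1"
    using ks_solution_local_estimate[OF sol \<open>r \<le> b\<close>, of 1] by auto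
  obtain D where D: "D tagged_division_of {r..b}" "\<gamma> fine D"
    using fine_division_exists_real[OF g(1)] by blast
  define V where "V = variation A b - variation A r"
  have V: "V \<ge> 0" unfolding V_def using variation_mono[OF bv assms(3,4)] by simp
  define f where "f = (\<lambda>(\<tau>::real, K::real set). norm (y \<tau>) * (1 + V) + 1)"
  have "norm (y t) \<le> sum f D" if t: "r \<le> t" "t \<le> b" for t
  proof -
    have "t \<in> \<Union>{K. \<exists>x. (x,K) \<in> D}" using tagged_division_ofD(6)[OF D(1)] t by auto
    then obtain \<tau> K where tK: "(\<tau>,K) \<in> D" "t \<in> K" by blast
    obtain u v where uv: "K = {u..v}" "u \<le> \<tau>" "\<tau> \<le> v" "r \<le> u" "v \<le> b"
      using tagged_division_pieceE[OF D(1) tK(1)] by blast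
    define lo where "lo = min t \<tau>"
    define hi where "hi = max t \<tau>"
    have "{lo..hi} \<subseteq> K" using tK(2) uv unfolding lo_def hi_def by auto
    also have "K \<subseteq> \<gamma> \<tau>" using D(2) tK(1) unfolding fine_def by blast
    finally have lohi: "r \<le> lo" "lo \<le> \<tau>" "\<tau> \<le> hi" "hi \<le> b" "lo \<le> hi" "{lo..hi} \<subseteq> \<gamma> \<tau>"
      using tK uv unfolding lo_def hi_def by auto
    have "opnorm (A hi - A lo) \<le> V"
      using opnorm_diff_le_variation[OF bv _ lohi(5)] variation_mono[OF bv assms(3) lohi(1)]
        variation_mono[OF bv _ lohi(4)] lohi assms(3)
      unfolding V_def by auto
    then have "norm ((A hi - A lo) *v y \<tau>) \<le> V * norm (y \<tau>)"
      by (meson mult_right_mono norm_ge_zero norm_matrix_vector_mult_le_opnorm order_trans)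
    moreover have "norm (y hi - y lo) \<le> norm ((A hi - A lo) *v y \<tau>) + norm ((A hi - A lo) *v y \<tau> - (y hi - y lo))"
      using norm_triangle_sub[of "y hi - y lo" "(A hi - A lo) *v y \<tau>"] by (simp add: norm_minus_commute)
    moreover have "norm (y t - y \<tau>) = norm (y hi - y lo)"
      unfolding lo_def hi_def by (cases "\<tau> \<le> t") (auto simp: norm_minus_commute)
    ultimately have "norm (y t) \<le> f (\<tau>, K)"
      using norm_triangle_sub[of "y t" "y \<tau>"] g(2)[OF lohi(1-4,6)] unfolding f_def
      by (simp add: algebra_simps)
    also have "\<dots> \<le> sum f D"
      by (rule member_le_sum) (use tK D V in \<open>auto simp: f_def\<close>)
    finally show ?thesis .
  qed
  then show ?thesis by (rule that)
qed

lemma ks_solution_zero_at_left_limit: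
  fixes A :: "real \<Rightarrow> 'n::finite mat"
  assumes bv: "locally_bv_J A" and inv: "invertible (mat 1 - jump_minus A t)"
    and sol: "ks_solution A y r" and "0 \<le> r" "r < t"
    and zero: "\<And>u. r \<le> u \<Longrightarrow> u < t \<Longrightarrow> y u = 0"
  shows "y t = 0"
proof -
  have "t > 0" using assms(4,5) by simp
  then obtain L where L: "(A \<longlongrightarrow> L) (at_left t)" by (rule locally_bv_left_limit[OF bv])
  have jump: "jump_minus A t = A t - L"
    unfolding jump_minus_def using tendsto_Lim[OF trivial_limit_at_left_real L] by simp
  have "((\<lambda>u. A t - A u) \<longlongrightarrow> A t - L) (at_left t)" by (intro tendsto_diff tendsto_const L)
  then have "((\<lambda>u. (A t - A u) *v y t) \<longlongrightarrow> (A t - L) *v y t) (at_left t)"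
    by (rule bounded_linear.tendsto[OF bounded_linear_matrix_vector_mult_left])
  then have lim: "((\<lambda>u. norm ((A t - A u) *v y t - y t)) \<longlongrightarrow> norm ((A t - L) *v y t - y t)) (at_left t)"
    by (intro tendsto_norm tendsto_diff tendsto_const)
  have "norm ((A t - L) *v y t - y t) \<le> 0 + e" if e: "e > 0" for e
  proof -
    have "r \<le> t" using assms(5) by simp
    then obtain \<gamma> where g: "gauge \<gamma>"
      "\<And>u v \<tau>. r \<le> u \<Longrightarrow> u \<le> \<tau> \<Longrightarrow> \<tau> \<le> v \<Longrightarrow> v \<le> t \<Longrightarrow> {u..v} \<subseteq> \<gamma> \<tau> \<Longrightarrow>
          norm ((A v - A u) *v y \<tau> - (y v - y u)) \<le> e"
      using ks_solution_local_estimate[OF sol _ e] by blast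
    obtain d where d: "d > 0" "ball t d \<subseteq> \<gamma> t"
      using g(1) unfolding gauge_def by (meson open_contains_ball)
    have "\<forall>\<^sub>F u in at_left t. u \<in> {max r (t - d)<..<t}"
      using d assms(5) by (intro eventually_at_left_real) auto
    then have "\<forall>\<^sub>F u in at_left t. norm ((A t - A u) *v y t - y t) \<le> e"
    proof (rule eventually_mono)
      fix u assume u: "u \<in> {max r (t - d)<..<t}"
      have "{u..t} \<subseteq> \<gamma> t" using d u by (auto simp: dist_real_def)
      then have "norm ((A t - A u) *v y t - (y t - y u)) \<le> e" using g(2)[of u t t] u by simp
      moreover have "y u = 0" using zero u by simp
      ultimately show "norm ((A t - A u) *v y t - y t) \<le> e" by simp
    qed
    from tendsto_upperbound[OF lim this trivial_limit_at_left_real] show ?thesis by simp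
  qed
  then have "norm ((A t - L) *v y t - y t) \<le> 0" by (rule field_le_epsilon)
  then have "(mat 1 - jump_minus A t) *v y t = 0"
    unfolding jump by (simp add: matrix_vector_mult_diff_rdistrib)
  then show ?thesis
    using inj_matrix_vector_mult[OF inv] by (metis injD matrix_vector_mult_0_right)
qed

text \<open>Near \<open>t\<^sub>0\<close> the local estimate makes \<open>y\<close> small; the increment from there to \<open>s\<close> is approximated
  by a Stieltjes sum, which is at most \<open>B\<close> times the variation of \<open>A\<close>.\<close>

lemma ks_solution_halving:
  fixes A :: "real \<Rightarrow> 'n::finite mat"
  assumes bv: "locally_bv_J A" and sol: "ks_solution A y t\<^sub>0" and "0 \<le> t\<^sub>0" "t\<^sub>0 < s" "y t\<^sub>0 = 0"
    and bound: "\<And>t. t\<^sub>0 < t \<Longrightarrow> t \<le> s \<Longrightarrow> norm (y t) \<le> B"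
    and small: "\<And>v. t\<^sub>0 < v \<Longrightarrow> v \<le> s \<Longrightarrow> variation A s - variation A v \<le> 1/2"
  shows "norm (y s) \<le> B / 2"
proof (rule field_le_epsilon)
  fix e :: real assume "e > 0"
  have "t\<^sub>0 \<le> s" "e/2 > 0" using assms(4) \<open>e > 0\<close> by simp_all
  obtain \<gamma> where "gauge \<gamma>" and local: "\<And>u v \<tau>. t\<^sub>0 \<le> u \<Longrightarrow> u \<le> \<tau> \<Longrightarrow> \<tau> \<le> v \<Longrightarrow> v \<le> s \<Longrightarrow>
      {u..v} \<subseteq> \<gamma> \<tau> \<Longrightarrow> norm ((A v - A u) *v y \<tau> - (y v - y u)) \<le> e/2"
    using ks_solution_local_estimate[OF sol \<open>t\<^sub>0 \<le> s\<close> \<open>e/2 > 0\<close>] by blast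
  obtain d where d: "d > 0" "ball t\<^sub>0 d \<subseteq> \<gamma> t\<^sub>0"
    using \<open>gauge \<gamma>\<close> unfolding gauge_def by (meson open_contains_ball)
  define v where "v = min (t\<^sub>0 + d/2) ((t\<^sub>0 + s)/2)"
  have v: "t\<^sub>0 < v" "v < s" using d(1) assms(4) unfolding v_def by (auto simp: min_less_iff_disj)
  have "{t\<^sub>0..v} \<subseteq> ball t\<^sub>0 d"
  proof
    fix x assume "x \<in> {t\<^sub>0..v}"
    then have "t\<^sub>0 \<le> x" "x \<le> t\<^sub>0 + d/2" unfolding v_def by auto
    then show "x \<in> ball t\<^sub>0 d" using d(1) by (simp add: dist_real_def)
  qed
  with d(2) have "{t\<^sub>0..v} \<subseteq> \<gamma> t\<^sub>0" by blast
  have "t\<^sub>0 \<le> v" "v \<le> s" using v by simp_all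
  with \<open>{t\<^sub>0..v} \<subseteq> \<gamma> t\<^sub>0\<close> have "norm (y v) \<le> e/2"
    using local[of t\<^sub>0 t\<^sub>0 v] \<open>y t\<^sub>0 = 0\<close> by simp
  obtain \<gamma>' where "gauge \<gamma>'"
    and \<gamma>': "\<And>D. D tagged_division_of {v..s} \<Longrightarrow> \<gamma>' fine D \<Longrightarrow> norm (ks_sum A y D - (y s - y v)) < e/2"
    using ks_has_vec_integralD[OF ks_solutionD[OF sol \<open>t\<^sub>0 \<le> v\<close> \<open>v \<le> s\<close>] \<open>e/2 > 0\<close>] by blast
  obtain D where D: "D tagged_division_of {v..s}" "\<gamma>' fine D"
    using fine_division_exists_real[OF \<open>gauge \<gamma>'\<close>] by blast
  have "B \<ge> 0" using bound[of s] assms(4) norm_ge_zero[of "y s"] by linarith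
  have "norm (ks_sum A y D) \<le> B * (variation A s - variation A v)"
    by (rule norm_ks_sum_le_variation[OF bv _ \<open>v \<le> s\<close> D(1)]) (use v assms(3) bound in auto)
  also have "\<dots> \<le> B * (1/2)" using small[of v] v \<open>B \<ge> 0\<close> by (intro mult_left_mono) auto
  finally have "norm (ks_sum A y D) \<le> B / 2" by simp
  moreover have "norm (y s - y v) \<le> norm (ks_sum A y D) + norm (ks_sum A y D - (y s - y v))"
    using norm_triangle_sub[of "y s - y v" "ks_sum A y D"] by (simp add: norm_minus_commute)
  ultimately show "norm (y s) \<le> B / 2 + e"
    using norm_triangle_sub[of "y s" "y v"] \<gamma>'[OF D] \<open>norm (y v) \<le> e/2\<close> by linarith
qed

lemma ks_solution_zero_right:
  fixes A :: "real \<Rightarrow> 'n::finite mat"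
  assumes bv: "locally_bv_J A" and sol: "ks_solution A y t\<^sub>0" and "0 \<le> t\<^sub>0" "t\<^sub>0 < u" "y t\<^sub>0 = 0"
    and small: "\<And>v s. t\<^sub>0 < v \<Longrightarrow> v \<le> s \<Longrightarrow> s \<le> u \<Longrightarrow> variation A s - variation A v \<le> 1/2"
    and s: "t\<^sub>0 < s" "s \<le> u"
  shows "y s = 0"
proof (rule ccontr)
  assume "y s \<noteq> 0"
  have "t\<^sub>0 \<le> u" using assms(4) by simp
  obtain B where B: "\<And>t. t\<^sub>0 \<le> t \<Longrightarrow> t \<le> u \<Longrightarrow> norm (y t) \<le> B"
    using ks_solution_bounded[OF bv sol assms(3) \<open>t\<^sub>0 \<le> u\<close>] by blast
  have "norm (y s') \<le> B / 2 ^ k" if "t\<^sub>0 < s'" "s' \<le> u" for k s'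
    using that
  proof (induction k arbitrary: s')
    case 0
    then show ?case using B[of s'] by simp
  next
    case (Suc k)
    have "norm (y s') \<le> (B / 2 ^ k) / 2"
    proof (rule ks_solution_halving[OF bv sol assms(3) Suc.prems(1) assms(5)])
      show "norm (y t) \<le> B / 2 ^ k" if "t\<^sub>0 < t" "t \<le> s'" for t
        using Suc.IH that Suc.prems(2) by simp
      show "variation A s' - variation A v \<le> 1/2" if "t\<^sub>0 < v" "v \<le> s'" for v
        using small that Suc.prems(2) by simp
    qed
    then show ?case by simp
  qed
  moreover obtain k :: nat where "B / norm (y s) < 2 ^ k"
    using real_arch_pow[of 2 "B / norm (y s)"] by auto
  then have "B / 2 ^ k < norm (y s)" using \<open>y s \<noteq> 0\<close> by (simp add: field_simps)
  ultimately show False using s by (simp add: not_le[symmetric])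
qed

theorem ks_solution_unique:
  fixes A :: "real \<Rightarrow> 'n::finite mat"
  assumes bv: "locally_bv_J A" and inv: "\<And>t. t > 0 \<Longrightarrow> invertible (mat 1 - jump_minus A t)"
    and sol: "ks_solution A y r" and r: "0 \<le> r" and "y r = 0" and "r \<le> t\<^sub>1"
  shows "y t\<^sub>1 = 0"
proof (rule ccontr)
  assume "y t\<^sub>1 \<noteq> 0"
  define S where "S = {t. r \<le> t \<and> t \<le> t\<^sub>1 \<and> (\<forall>u. r \<le> u \<and> u \<le> t \<longrightarrow> y u = 0)}"
  have "r \<in> S" unfolding S_def using assms by auto
  have bdd: "bdd_above S" unfolding S_def by (rule bdd_aboveI[of _ t\<^sub>1]) auto
  define t\<^sub>0 where "t\<^sub>0 = Sup S"
  have "r \<le> t\<^sub>0" unfolding t\<^sub>0_def by (rule cSup_upper[OF \<open>r \<in> S\<close> bdd])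
  have "t\<^sub>0 \<le> t\<^sub>1" unfolding t\<^sub>0_def by (rule cSup_least) (use \<open>r \<in> S\<close> S_def in auto)
  have zero_before: "y u = 0" if "r \<le> u" "u < t\<^sub>0" for u
  proof -
    have "S \<noteq> {}" using \<open>r \<in> S\<close> by blast
    with \<open>u < t\<^sub>0\<close> obtain s where "s \<in> S" "u < s" unfolding t\<^sub>0_def by (rule less_cSupE)
    then show ?thesis unfolding S_def using that by auto
  qed
  have "y t\<^sub>0 = 0"
  proof (cases "t\<^sub>0 = r")
    case False
    then have "r < t\<^sub>0" using \<open>r \<le> t\<^sub>0\<close> by simp
    with r have "t\<^sub>0 > 0" by simp
    from ks_solution_zero_at_left_limit[OF bv inv[OF this] sol r \<open>r < t\<^sub>0\<close> zero_before]
    show ?thesis .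
  qed (use \<open>y r = 0\<close> in simp)
  then have zero: "y u = 0" if "r \<le> u" "u \<le> t\<^sub>0" for u
    using zero_before that by (cases "u = t\<^sub>0") auto
  have "t\<^sub>0 \<noteq> t\<^sub>1" using zero[of t\<^sub>1] \<open>y t\<^sub>1 \<noteq> 0\<close> \<open>r \<le> t\<^sub>1\<close> by auto
  then have "t\<^sub>0 < t\<^sub>1" using \<open>t\<^sub>0 \<le> t\<^sub>1\<close> by simp
  moreover have "0 \<le> t\<^sub>0" using r \<open>r \<le> t\<^sub>0\<close> by simp
  ultimately obtain u where u: "t\<^sub>0 < u" "u \<le> t\<^sub>1"
    and small: "\<And>v s. t\<^sub>0 < v \<Longrightarrow> v \<le> s \<Longrightarrow> s \<le> u \<Longrightarrow> variation A s - variation A v < 1/2"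
    using variation_small_right[OF bv, of t\<^sub>0 t\<^sub>1 "1/2"] by auto
  have "y s = 0" if "r \<le> s" "s \<le> u" for s
  proof (cases "s \<le> t\<^sub>0")
    case False
    show ?thesis
    proof (rule ks_solution_zero_right[OF bv ks_solution_mono[OF sol \<open>r \<le> t\<^sub>0\<close>] \<open>0 \<le> t\<^sub>0\<close> u(1) \<open>y t\<^sub>0 = 0\<close>])
      show "variation A s' - variation A v \<le> 1/2" if "t\<^sub>0 < v" "v \<le> s'" "s' \<le> u" for v s'
        using small[OF that] by simp
    qed (use False that in auto)
  qed (use zero that in auto)
  then have "u \<in> S" unfolding S_def using u \<open>r \<le> t\<^sub>0\<close> by auto
  then show False using cSup_upper[OF _ bdd, of u] u(1) unfolding t\<^sub>0_def by simp
qed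

section \<open>The transition matrix\<close>

lemma transition_matrix_integral:
  assumes "transition_matrix A U" "0 \<le> s" "s \<le> t"
  shows "ks_has_vec_integral A (\<lambda>\<rho>. U \<rho> s *v w) (U t s *v w - w) s t"
proof -
  have "ks_has_integral A (\<lambda>\<rho>. U \<rho> s) (U t s - mat 1) s t"
    using assms unfolding transition_matrix_def ks_has_integral_or_def by auto
  from ks_has_integral_imp_vec[OF this, of w] show ?thesis
    by (simp add: matrix_vector_mult_diff_rdistrib)
qed

lemma transition_matrix_self:
  assumes "transition_matrix A U" "0 \<le> s"
  shows "U s s = mat 1"
proof -
  have "U s s *v w = mat 1 *v w" for w
    using ks_has_vec_integral_trivial[OF transition_matrix_integral[OF assms order_refl]] by simp
  then show ?thesis by (simp add: matrix_eq)
qed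

lemma transition_matrix_solution:
  assumes "transition_matrix A U" "0 \<le> s"
  shows "ks_solution A (\<lambda>t. U t s *v w) s"
  unfolding ks_solution_def
proof (intro allI impI)
  fix c t assume "s \<le> c" "c \<le> t"
  from ks_has_vec_integral_tail[OF transition_matrix_integral[OF assms \<open>s \<le> c\<close>]
      transition_matrix_integral[OF assms] \<open>c \<le> t\<close>] \<open>s \<le> c\<close> \<open>c \<le> t\<close>
  show "ks_has_vec_integral A (\<lambda>t. U t s *v w) (U t s *v w - U c s *v w) c t" by simp
qed

text \<open>Both sides, applied to a vector, solve the equation from time \<open>r\<close> with the same value at \<open>r\<close>.\<close>

theorem transition_matrix_cocycle:
  fixes A :: "real \<Rightarrow> 'n::finite mat"
  assumes bv: "locally_bv_J A" and inv: "\<And>t. t > 0 \<Longrightarrow> invertible (mat 1 - jump_minus A t)"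
    and U: "transition_matrix A U" and "0 \<le> s" "s \<le> r" "r \<le> t"
  shows "U t s = U t r ** U r s"
proof -
  have r: "0 \<le> r" using assms by simp
  have "U t s *v w = (U t r ** U r s) *v w" for w
  proof -
    define y where "y \<rho> = U \<rho> s *v w - U \<rho> r *v (U r s *v w)" for \<rho>
    from ks_solution_diff[OF ks_solution_mono[OF transition_matrix_solution[OF U \<open>0 \<le> s\<close>] \<open>s \<le> r\<close>]
        transition_matrix_solution[OF U r]]
    have "ks_solution A y r" unfolding y_def .
    moreover have "y r = 0" unfolding y_def using transition_matrix_self[OF U r] by simp
    ultimately have "y t = 0" using ks_solution_unique[OF bv inv _ r] \<open>r \<le> t\<close> by blast
    then show ?thesis unfolding y_def by (simp add: matrix_vector_mul_assoc)
  qed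
  then show ?thesis by (simp add: matrix_eq)
qed

section \<open>Uniform asymptotic stability and exponential decay\<close>

lemma uniformly_stable_imp_bounded:
  fixes U :: "real \<Rightarrow> real \<Rightarrow> 'n::finite mat"
  assumes "uniformly_stable U"
  obtains M where "M > 0" "\<And>s t. 0 \<le> s \<Longrightarrow> s \<le> t \<Longrightarrow> opnorm (U t s) \<le> M"
proof -
  obtain \<delta> where "\<delta> > 0" and \<delta>: "\<And>s x t. 0 \<le> s \<Longrightarrow> norm x < \<delta> \<Longrightarrow> s \<le> t \<Longrightarrow> norm (U t s *v x) < 1"
    using assms unfolding uniformly_stable_def by (metis zero_less_one)
  have "opnorm (U t s) \<le> 2 / \<delta>" if "0 \<le> s" "s \<le> t" for s t
    using opnorm_le_of_ball_bound[OF \<open>\<delta> > 0\<close>, of "U t s" 1] \<delta> that by simp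
  with \<open>\<delta> > 0\<close> show ?thesis using that[of "2 / \<delta>"] by simp
qed

lemma uniformly_asymptotically_stable_imp_halving:
  fixes U :: "real \<Rightarrow> real \<Rightarrow> 'n::finite mat"
  assumes "uniformly_asymptotically_stable U"
  obtains T where "T > 0" "\<And>s t. 0 \<le> s \<Longrightarrow> s + T \<le> t \<Longrightarrow> opnorm (U t s) \<le> 1/2"
proof -
  obtain \<delta> where "\<delta> > 0" and attr: "\<And>\<epsilon>. \<epsilon> > 0 \<Longrightarrow> \<exists>T\<ge>0. \<forall>s\<ge>0. \<forall>x. norm x < \<delta> \<longrightarrow>
      (\<forall>t\<ge>s + T. norm (U t s *v x) < \<epsilon>)"
    using assms unfolding uniformly_asymptotically_stable_def by blast
  obtain T where "T \<ge> 0"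
    and T: "\<And>s x t. 0 \<le> s \<Longrightarrow> norm x < \<delta> \<Longrightarrow> s + T \<le> t \<Longrightarrow> norm (U t s *v x) < \<delta> / 4"
    using attr[of "\<delta> / 4"] \<open>\<delta> > 0\<close> by auto
  have "opnorm (U t s) \<le> 1/2" if "0 \<le> s" "s + (T + 1) \<le> t" for s t
  proof -
    have "opnorm (U t s) \<le> 2 * (\<delta> / 4) / \<delta>"
      by (rule opnorm_le_of_ball_bound[OF \<open>\<delta> > 0\<close>]) (use T that \<open>T \<ge> 0\<close> in auto)
    then show ?thesis using \<open>\<delta> > 0\<close> by simp
  qed
  moreover have "T + 1 > 0" using \<open>T \<ge> 0\<close> by simp
  ultimately show ?thesis using that by blast
qed

context
  fixes U :: "real \<Rightarrow> real \<Rightarrow> 'n::finite mat" and M T :: real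
  assumes cocycle: "\<And>s r t. 0 \<le> s \<Longrightarrow> s \<le> r \<Longrightarrow> r \<le> t \<Longrightarrow> U t s = U t r ** U r s"
    and bounded: "\<And>s t. 0 \<le> s \<Longrightarrow> s \<le> t \<Longrightarrow> opnorm (U t s) \<le> M"
    and "T > 0" and halving: "\<And>s t. 0 \<le> s \<Longrightarrow> s + T \<le> t \<Longrightarrow> opnorm (U t s) \<le> 1/2"
begin

lemma opnorm_le_geometric:
  assumes "0 \<le> s" "0 \<le> h"
  shows "opnorm (U (s + real k * T + h) s) \<le> M * (1/2) ^ k"
  using assms
proof (induction k arbitrary: s)
  case 0
  then show ?case using bounded[of s "s + h"] by simp
next
  case (Suc k)
  have split: "s + real (Suc k) * T + h = (s + T) + real k * T + h" by (simp add: algebra_simps)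
  have "U (s + real (Suc k) * T + h) s = U ((s + T) + real k * T + h) (s + T) ** U (s + T) s"
    unfolding split by (rule cocycle) (use Suc.prems \<open>T > 0\<close> in auto)
  then have "opnorm (U (s + real (Suc k) * T + h) s)
      \<le> opnorm (U ((s + T) + real k * T + h) (s + T)) * opnorm (U (s + T) s)"
    by (metis opnorm_matrix_mult_le)
  also have "\<dots> \<le> (M * (1/2) ^ k) * (1/2)"
  proof (rule mult_mono)
    show "opnorm (U ((s + T) + real k * T + h) (s + T)) \<le> M * (1/2) ^ k"
      using Suc.IH[of "s + T"] Suc.prems \<open>T > 0\<close> by simp
    show "opnorm (U (s + T) s) \<le> 1/2" using halving[of s "s + T"] Suc.prems by simp
    have "0 \<le> M" using order_trans[OF opnorm_nonneg bounded[OF Suc.prems(1) order_refl]] .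
    then show "0 \<le> M * (1/2) ^ k" by simp
  qed (rule opnorm_nonneg)
  finally show ?case by simp
qed

lemma exponential_bound_of_halving:
  assumes "0 \<le> s" "s \<le> t"
  shows "opnorm (U t s) \<le> 2 * M * exp (- (ln 2 / T) * (t - s))"
proof -
  define k where "k = nat \<lfloor>(t - s) / T\<rfloor>"
  have "0 \<le> (t - s) / T" using assms \<open>T > 0\<close> by simp
  then have k: "real k \<le> (t - s) / T" "(t - s) / T < real k + 1" unfolding k_def by linarith+
  have "M \<ge> 0" using order_trans[OF opnorm_nonneg bounded[OF assms(1) order_refl]] .
  have "t = s + real k * T + (t - s - real k * T)" by simp
  moreover have "0 \<le> t - s - real k * T" using k(1) \<open>T > 0\<close> by (simp add: field_simps)
  ultimately have "opnorm (U t s) \<le> M * (1/2) ^ k"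
    using opnorm_le_geometric[OF assms(1)] by metis
  also have "(1/2::real) ^ k = exp (- ln 2 * real k)"
  proof -
    have "exp (- ln 2 * real k) = exp (- ln 2) ^ k" by (simp add: exp_of_nat_mult[symmetric] mult.commute)
    then show ?thesis by (simp add: exp_minus)
  qed
  also have "M * exp (- ln 2 * real k) \<le> M * exp (- (ln 2 / T) * (t - s) + ln 2)"
  proof -
    have "ln 2 * ((t - s) / T) \<le> ln 2 * (real k + 1)" using k(2) by (intro mult_left_mono) auto
    then have "- ln 2 * real k \<le> - (ln 2 / T) * (t - s) + ln 2" by (simp add: algebra_simps)
    then show ?thesis using \<open>M \<ge> 0\<close> by (intro mult_left_mono) auto
  qed
  also have "\<dots> = 2 * M * exp (- (ln 2 / T) * (t - s))" by (simp only: exp_add exp_ln_iff) simp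
  finally show ?thesis .
qed

end

lemma exponential_bound_imp_decay:
  fixes U :: "real \<Rightarrow> real \<Rightarrow> 'n::finite mat"
  assumes bound: "\<And>s t. 0 \<le> s \<Longrightarrow> s \<le> t \<Longrightarrow> opnorm (U t s) \<le> K * exp (- \<alpha> * (t - s))"
    and "0 \<le> s" "s \<le> t"
  shows "norm (U t s *v x) \<le> K * exp (- \<alpha> * (t - s)) * norm x"
  using norm_matrix_vector_mult_le_opnorm[of "U t s" x] bound[OF assms(2,3)]
  by (meson mult_right_mono norm_ge_zero order_trans)

lemma exponential_bound_imp_uniformly_stable:
  fixes U :: "real \<Rightarrow> real \<Rightarrow> 'n::finite mat"
  assumes "\<alpha> > 0" "K > 0" and bound: "\<And>s t. 0 \<le> s \<Longrightarrow> s \<le> t \<Longrightarrow> opnorm (U t s) \<le> K * exp (- \<alpha> * (t - s))"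
  shows "uniformly_stable U"
  unfolding uniformly_stable_def
proof (intro allI impI)
  fix \<epsilon> :: real assume "\<epsilon> > 0"
  show "\<exists>\<delta>>0. \<forall>s\<ge>0. \<forall>x. norm x < \<delta> \<longrightarrow> (\<forall>t\<ge>s. norm (U t s *v x) < \<epsilon>)"
  proof (intro exI[of _ "\<epsilon> / K"] conjI allI impI)
    show "\<epsilon> / K > 0" using \<open>K > 0\<close> \<open>\<epsilon> > 0\<close> by simp
    fix s t :: real and x :: "real^'n"
    assume "0 \<le> s" "norm x < \<epsilon> / K" "s \<le> t"
    have "exp (- \<alpha> * (t - s)) \<le> 1" using \<open>s \<le> t\<close> \<open>\<alpha> > 0\<close> by simp
    then have "K * exp (- \<alpha> * (t - s)) * norm x \<le> K * 1 * norm x"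
      using \<open>K > 0\<close> by (intro mult_right_mono mult_left_mono) auto
    also have "\<dots> < \<epsilon>" using \<open>norm x < \<epsilon> / K\<close> \<open>K > 0\<close> by (simp add: field_simps)
    finally show "norm (U t s *v x) < \<epsilon>"
      using exponential_bound_imp_decay[OF bound \<open>0 \<le> s\<close> \<open>s \<le> t\<close>, of x] by simp
  qed
qed

lemma exponential_bound_imp_uniformly_asymptotically_stable:
  fixes U :: "real \<Rightarrow> real \<Rightarrow> 'n::finite mat"
  assumes "\<alpha> > 0" "K > 0" and bound: "\<And>s t. 0 \<le> s \<Longrightarrow> s \<le> t \<Longrightarrow> opnorm (U t s) \<le> K * exp (- \<alpha> * (t - s))"
  shows "uniformly_asymptotically_stable U"
proof -
  have "\<exists>T\<ge>0. \<forall>s\<ge>0. \<forall>x. norm x < 1 \<longrightarrow> (\<forall>t\<ge>s + T. norm (U t s *v x) < \<epsilon>)"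
    if "\<epsilon> > 0" for \<epsilon>
  proof (intro exI[of _ "max 0 (ln (K / \<epsilon>) / \<alpha>)"] conjI allI impI)
    fix s t :: real and x :: "real^'n"
    assume "0 \<le> s" "norm x < 1" and t: "s + max 0 (ln (K / \<epsilon>) / \<alpha>) \<le> t"
    have "ln (K / \<epsilon>) / \<alpha> \<le> t - s" "s \<le> t"
      using t max.cobounded1[of 0 "ln (K / \<epsilon>) / \<alpha>"] max.cobounded2[of 0 "ln (K / \<epsilon>) / \<alpha>"]
      by linarith+
    then have "ln (K / \<epsilon>) \<le> \<alpha> * (t - s)" "s \<le> t" using \<open>\<alpha> > 0\<close> by (simp_all add: field_simps)
    then have "exp (- \<alpha> * (t - s)) \<le> exp (- ln (K / \<epsilon>))" by simp
    also have "\<dots> = \<epsilon> / K" using \<open>K > 0\<close> \<open>\<epsilon> > 0\<close> by (simp add: exp_minus)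
    finally have "K * exp (- \<alpha> * (t - s)) * norm x \<le> \<epsilon> * norm x"
      using \<open>K > 0\<close> by (intro mult_right_mono) (simp_all add: field_simps)
    also have "\<dots> < \<epsilon>" using \<open>norm x < 1\<close> \<open>\<epsilon> > 0\<close> by simp
    finally show "norm (U t s *v x) < \<epsilon>"
      using exponential_bound_imp_decay[OF bound \<open>0 \<le> s\<close> \<open>s \<le> t\<close>, of x] by simp
  qed simp
  then show ?thesis
    using exponential_bound_imp_uniformly_stable[OF assms] zero_less_one
    unfolding uniformly_asymptotically_stable_def by blast
qed

theorem theorem3p7:
  fixes A :: "real \<Rightarrow> real^'n::finite^'n" and U :: "real \<Rightarrow> real \<Rightarrow> real^'n^'n"
  assumes "locally_bv_J A"
    and "\<And>t. t > 0 \<Longrightarrow> invertible (mat 1 - jump_minus A t)"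
    and "\<And>t. t \<ge> 0 \<Longrightarrow> invertible (mat 1 + jump_plus A t)"
    and "transition_matrix A U"
  shows "uniformly_asymptotically_stable U \<longleftrightarrow>
    (\<exists>\<alpha>>0. \<exists>K>0. \<forall>s0 t. 0 \<le> s0 \<and> s0 \<le> t \<longrightarrow> opnorm (U t s0) \<le> K * exp (- \<alpha> * (t - s0)))"
proof
  assume uas: "uniformly_asymptotically_stable U"
  obtain M where "M > 0" and M: "\<And>s t. 0 \<le> s \<Longrightarrow> s \<le> t \<Longrightarrow> opnorm (U t s) \<le> M"
    using uas unfolding uniformly_asymptotically_stable_def by (metis uniformly_stable_imp_bounded)
  obtain T where "T > 0" and T: "\<And>s t. 0 \<le> s \<Longrightarrow> s + T \<le> t \<Longrightarrow> opnorm (U t s) \<le> 1/2"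
    using uniformly_asymptotically_stable_imp_halving[OF uas] by blast
  \<comment> \<open>The hypothesis on \<open>I + \<Delta>\<^sup>+A\<close> only matters for solving backwards in time.\<close>
  note cocycle = transition_matrix_cocycle[OF assms(1,2,4)]
  have "opnorm (U t s) \<le> (2 * M) * exp (- (ln 2 / T) * (t - s))" if "0 \<le> s" "s \<le> t" for s t
    using exponential_bound_of_halving[OF cocycle M \<open>T > 0\<close> T that] by simp
  moreover have "ln 2 / T > 0" "2 * M > 0" using \<open>T > 0\<close> \<open>M > 0\<close> by simp_all
  ultimately show "\<exists>\<alpha>>0. \<exists>K>0. \<forall>s0 t. 0 \<le> s0 \<and> s0 \<le> t \<longrightarrow> opnorm (U t s0) \<le> K * exp (- \<alpha> * (t - s0))"
    by blast
next
  assume "\<exists>\<alpha>>0. \<exists>K>0. \<forall>s0 t. 0 \<le> s0 \<and> s0 \<le> t \<longrightarrow> opnorm (U t s0) \<le> K * exp (- \<alpha> * (t - s0))"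
  then show "uniformly_asymptotically_stable U"
    using exponential_bound_imp_uniformly_asymptotically_stable by blast
qed

end
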